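(* Let $\pi\in\mathcal P(\mathbb R^d)$ and let $\mathsf P$ be a Markov kernel on $\mathbb R^d$ that is reversible with respect to $\pi$. Suppose that there exist increasing functions $F:(0,\tfrac12]\to\mathbb R_+$ and $\Upsilon:\mathbb R_+\to\mathbb R_+$ such that for every measurable partition $\mathbb R^d=S_1\sqcup S_2\sqcup S_3$, $$\pi(S_3)\ \ge\ \Upsilon\big(d(S_1,S_2)\big)\,F\big(\min\{\pi(S_1),\pi(S_2)\}\big),$$ where $d(S_1,S_2)=\inf_{x\in S_1,y\in S_2}\|x-y\|$. Suppose moreover that there exist $\epsilon,\delta>0$ such that for all $x,y\in\mathbb R^d$, $\|x-y\|<\delta$ implies $\mathrm{TV}(\delta_x\mathsf P,\delta_y\mathsf P)<1-\epsilon$. Then $$\mathrm{Gap}(\mathsf P)\ \ge\ \frac{\epsilon^2}{8}\left[\sup_{\theta\in[0,1]}\min\Big\{1-\theta,\ \Upsilon(\delta)\inf_{t\in(0,\frac12]}\frac{F(\theta t)}{2t}\Big\}\right]^2 .$$ If in addition $F$ is concave on $(0,\tfrac12]$, then $$\mathrm{Gap}(\mathsf P)\ \ge\ \frac{\epsilon^2}{8}\left[\min\Big\{\frac12,\ \Upsilon(\delta)\,F(\tfrac14)\Big\}\right]^2 .$$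
   Context: $\mathcal P(\mathbb R^d)$ denotes the probability distributions on $\mathbb R^d$ (with densities, denoted by the same letter). For a Markov kernel $\mathsf P$, $\delta_x\mathsf P$ is the distribution $\mathsf P(x,\cdot)$, and $\mathsf Pu(x)=\int \mathsf P(x,y)u(y)\,dy$. $\mathsf P$ is reversible w.r.t. $\pi$ if $\pi(x)\mathsf P(x,y)=\pi(y)\mathsf P(y,x)$. Total variation: $\mathrm{TV}(\mu,\nu)=\sup_A|\mu(A)-\nu(A)|$. The spectral gap is $$\mathrm{Gap}(\mathsf P)=\inf\Big\{1-\frac{\mathbb E_\pi[u\cdot \mathsf Pu]}{\mathbb E_\pi[u^2]}:\ 0\ne u\in L^2(\pi),\ \mathbb E_\pi[u]=0\Big\}.$$ *)

theory Defs
  imports "HOL-Analysis.Analysis"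
begin

type_synonym 'n pt = "real ^ 'n"

definition prob_density :: "('n::finite pt \<Rightarrow> real) \<Rightarrow> bool" where
  "prob_density p \<longleftrightarrow> p \<in> borel_measurable lborel \<and> (\<forall>x. 0 \<le> p x)
      \<and> (\<integral>\<^sup>+ x. ennreal (p x) \<partial>lborel) = 1"

text \<open>A Markov kernel given by transition densities: P x is the density of delta_x P.\<close>
definition markov_kernel_density :: "('n::finite pt \<Rightarrow> 'n pt \<Rightarrow> real) \<Rightarrow> bool" where
  "markov_kernel_density P \<longleftrightarrow>
      (\<lambda>(x, y). P x y) \<in> borel_measurable (lborel \<Otimes>\<^sub>M lborel)
      \<and> (\<forall>x y. 0 \<le> P x y)
      \<and> (\<forall>x. (\<integral>\<^sup>+ y. ennreal (P x y) \<partial>lborel) = 1)"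

definition reversible :: "('n::finite pt \<Rightarrow> 'n pt \<Rightarrow> real) \<Rightarrow> ('n pt \<Rightarrow> real) \<Rightarrow> bool" where
  "reversible P p \<longleftrightarrow> (\<forall>x y. p x * P x y = p y * P y x)"

definition dmeasure :: "('n::finite pt \<Rightarrow> real) \<Rightarrow> 'n pt measure" where
  "dmeasure p = density lborel (\<lambda>x. ennreal (p x))"

definition TV :: "'n::finite pt measure \<Rightarrow> 'n pt measure \<Rightarrow> real" where
  "TV \<mu> \<nu> = (SUP A \<in> sets borel. \<bar>measure \<mu> A - measure \<nu> A\<bar>)"

definition kernel_apply :: "('n::finite pt \<Rightarrow> 'n pt \<Rightarrow> real) \<Rightarrow> ('n pt \<Rightarrow> real) \<Rightarrow> 'n pt \<Rightarrow> real" where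
  "kernel_apply P u x = (\<integral> y. P x y * u y \<partial>lborel)"

definition L2_0 :: "('n::finite pt \<Rightarrow> real) \<Rightarrow> ('n pt \<Rightarrow> real) set" where
  "L2_0 p = {u. u \<in> borel_measurable borel \<and> integrable (dmeasure p) (\<lambda>x. (u x)\<^sup>2)
              \<and> (\<integral> x. (u x)\<^sup>2 \<partial>dmeasure p) \<noteq> 0
              \<and> (\<integral> x. u x \<partial>dmeasure p) = 0}"

definition Gap :: "('n::finite pt \<Rightarrow> 'n pt \<Rightarrow> real) \<Rightarrow> ('n pt \<Rightarrow> real) \<Rightarrow> real" where
  "Gap P p = (INF u \<in> L2_0 p.
      1 - (\<integral> x. u x * kernel_apply P u x \<partial>dmeasure p) / (\<integral> x. (u x)\<^sup>2 \<partial>dmeasure p))"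

definition set_dist :: "'n::finite pt set \<Rightarrow> 'n pt set \<Rightarrow> real" where
  "set_dist S1 S2 = Inf {norm (x - y) | x y. x \<in> S1 \<and> y \<in> S2}"

end

theory Submission
  imports Defs "HOL-Probability.Probability"
begin

(*
  Cheeger's inequality for reversible kernels (Lawler and Sokal): if the ergodic flow
  Q(A, -A) = int_A P(x, -A) pi(dx) is at least h pi(A) whenever pi(A) <= 1/2, then
  Gap(P) >= h^2/2.  Centre a mean-zero u at a median c and let f be the positive or the
  negative part of u - c.  Integrating the flow bound over the level sets {f^2 > s} (coarea)
  gives 2 h int f^2 dpi <= int int |f(x)^2 - f(y)^2| P(x,dy) pi(dx), and AM-GM turns the
  right-hand side into the Dirichlet form of f, which is at most that of u, namely
  2 <u,u> - 2 <u,Pu> by reversibility.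

  The flow bound comes from the isoperimetric inequality.  Given A, let S1 be the points of A
  that leave A with probability < eps/2 and S2 the points of -A that enter A with probability
  < eps/2.  Transition laws from S1 and from S2 are more than 1 - eps apart in total variation,
  so d(S1, S2) >= delta.  Either A - S1 or -A - S2 carries a (1 - theta) fraction of pi(A), or
  S1 and S2 both have mass > theta pi(A) and the isoperimetric inequality makes the rest
  (A - S1) u (-A - S2) large; each point of the rest contributes eps/2 to the flow.  For
  concave F >= 0, F(s)/s is nonincreasing, which evaluates the bound at theta = 1/2.
*)

lemma abs_diff_squares_le:
  fixes a b h :: real
  assumes h: "0 < h"
  shows "\<bar>a\<^sup>2 - b\<^sup>2\<bar> \<le> (a - b)\<^sup>2 / h + h/2 * a\<^sup>2 + h/2 * b\<^sup>2"
proof -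
  define x y where "x = \<bar>a - b\<bar>" and "y = \<bar>a + b\<bar>"
  have "h * \<bar>a\<^sup>2 - b\<^sup>2\<bar> = h * (x * y)"
    unfolding x_def y_def by (simp add: power2_eq_square abs_mult[symmetric] algebra_simps)
  also have "\<dots> \<le> x\<^sup>2 + h\<^sup>2/4 * y\<^sup>2"
    using zero_le_power2[of "x - h/2 * y"] by (simp add: power2_eq_square algebra_simps)
  also have "\<dots> \<le> (a - b)\<^sup>2 + h\<^sup>2/2 * a\<^sup>2 + h\<^sup>2/2 * b\<^sup>2"
    using zero_le_power2[of "h * (a - b)"] unfolding x_def y_def by (simp add: power2_eq_square algebra_simps)
  finally show ?thesis using h by (simp add: field_simps power2_eq_square)
qed

lemma pos_part_sq_plus_neg_part_sq: "(max a 0)\<^sup>2 + (max (-a) 0)\<^sup>2 = (a::real)\<^sup>2"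
  by (cases "0 \<le> a") (auto simp: power2_eq_square)

lemma pos_neg_parts_diff_sq_le:
  "(max a 0 - max b 0)\<^sup>2 + (max (-a) 0 - max (-b) 0)\<^sup>2 \<le> ((a::real) - b)\<^sup>2"
proof (cases "0 \<le> a"; cases "0 \<le> b")
  assume "0 \<le> a" "\<not> 0 \<le> b"
  then have "a * b \<le> 0" by (simp add: mult_nonneg_nonpos)
  then show ?thesis using \<open>0 \<le> a\<close> \<open>\<not> 0 \<le> b\<close> by (simp add: power2_eq_square algebra_simps)
next
  assume "\<not> 0 \<le> a" "0 \<le> b"
  then have "a * b \<le> 0" by (simp add: mult_nonpos_nonneg)
  then show ?thesis using \<open>\<not> 0 \<le> a\<close> \<open>0 \<le> b\<close> by (simp add: power2_eq_square algebra_simps)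
qed (simp_all add: power2_eq_square algebra_simps)

lemma concave_on_nonneg_scaled_le:
  fixes F :: "real \<Rightarrow> real"
  assumes concave: "concave_on {0<..b} F" and nonneg: "\<forall>t\<in>{0<..b}. 0 \<le> F t"
    and s: "0 < s" "s \<le> a" "a \<le> b"
  shows "s * F a \<le> a * F s"
proof -
  have chord: "(s - r) / (a - r) * F a \<le> F s" if r: "0 < r" "r < s" for r
  proof -
    define l where "l = (s - r) / (a - r)"
    have l: "0 \<le> l" "l \<le> 1" using r s by (auto simp: l_def field_simps)
    have "l * (a - r) = s - r" using r s by (simp add: l_def)
    then have l_comb: "(1 - l) * r + l * a = s" by (simp add: algebra_simps)
    have "(1 - l) * F r + l * F a \<le> F ((1 - l) *\<^sub>R r + l *\<^sub>R a)"
      by (rule concave_onD[OF concave]) (use l r s in auto)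
    moreover have "0 \<le> (1 - l) * F r" using l nonneg r s by auto
    ultimately show ?thesis using l_comb by (simp add: l_def)
  qed
  have "((\<lambda>r. (s - r) / (a - r) * F a) \<longlongrightarrow> (s - 0) / (a - 0) * F a) (at_right 0)"
    using s by (intro tendsto_intros) auto
  moreover have "\<forall>\<^sub>F r in at_right 0. (s - r) / (a - r) * F a \<le> F s"
    unfolding eventually_at_right_field using s chord by (intro exI[of _ s]) auto
  ultimately have "s / a * F a \<le> F s"
    using tendsto_upperbound by fastforce
  then show ?thesis using s by (simp add: field_simps)
qed

lemma cSUP_sq_le:
  fixes f :: "'a \<Rightarrow> real"
  assumes "S \<noteq> {}" and nonneg: "\<And>x. x \<in> S \<Longrightarrow> 0 \<le> f x" and le: "\<And>x. x \<in> S \<Longrightarrow> (f x)\<^sup>2 \<le> B"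
  shows "(SUP x\<in>S. f x)\<^sup>2 \<le> B"
proof -
  obtain x0 where x0: "x0 \<in> S" using assms(1) by blast
  have B: "0 \<le> B" using le[OF x0] zero_le_power2[of "f x0"] by linarith
  have le_sqrt: "f x \<le> sqrt B" if "x \<in> S" for x
    using nonneg[OF that] le[OF that] by (simp add: real_le_rsqrt)
  have "0 \<le> (SUP x\<in>S. f x)"
    using nonneg[OF x0] le_sqrt by (intro cSUP_upper2[OF _ x0]) (auto intro!: bdd_aboveI2[of _ _ "sqrt B"])
  moreover have "(SUP x\<in>S. f x) \<le> sqrt B"
    using assms(1) le_sqrt by (rule cSUP_least)
  ultimately show ?thesis
    using B by (metis power_mono real_sqrt_pow2)
qed

lemma (in real_distribution) median_exists:
  "\<exists>c. measure M {c<..} \<le> 1/2 \<and> measure M {..<c} \<le> 1/2"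
proof -
  define S where "S = {t. 1/2 \<le> cdf M t}"
  have "\<forall>\<^sub>F t in at_top. 1/2 < cdf M t"
    using cdf_lim_at_top_prob by (rule order_tendstoD) simp
  then obtain t where "1/2 < cdf M t" by (auto simp: eventually_at_top_linorder)
  then have S_ne: "S \<noteq> {}" unfolding S_def by (blast intro: less_imp_le)
  have "\<forall>\<^sub>F t in at_bot. cdf M t < 1/2"
    using cdf_lim_at_bot by (rule order_tendstoD) simp
  then obtain b where b: "\<And>t. t \<le> b \<Longrightarrow> cdf M t < 1/2" by (auto simp: eventually_at_bot_linorder)
  have S_bdd: "bdd_below S"
  proof (rule bdd_belowI)
    show "b \<le> s" if "s \<in> S" for s
      using that b[of s] by (cases "s \<le> b") (auto simp: S_def)
  qed
  define c where "c = Inf S"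
  have "\<forall>\<^sub>F t in at_right c. 1/2 \<le> cdf M t"
    unfolding eventually_at_right_field
  proof (intro exI[of _ "c + 1"] conjI allI impI)
    fix t assume "c < t" "t < c + 1"
    then obtain s where "s \<in> S" "s < t" using cInf_less_iff[OF S_ne S_bdd] by (auto simp: c_def)
    then show "1/2 \<le> cdf M t" using cdf_nondecreasing[of s t] by (simp add: S_def)
  qed simp
  then have "1/2 \<le> cdf M c"
    using cdf_is_right_cont[of c] by (intro tendsto_lowerbound) (auto simp: continuous_within)
  moreover have "measure M {c<..} = 1 - cdf M c"
    using prob_compl[of "{..c}"] by (simp add: cdf_def Compl_eq_Diff_UNIV[symmetric] flip: atMost_def)
  moreover have "\<forall>\<^sub>F t in at_left c. cdf M t \<le> 1/2"
    unfolding eventually_at_left_field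
  proof (intro exI[of _ "c - 1"] conjI allI impI)
    fix t assume "c - 1 < t" "t < c"
    then have "t \<notin> S" using cInf_lower[OF _ S_bdd] by (force simp: c_def)
    then show "cdf M t \<le> 1/2" by (simp add: S_def)
  qed simp
  then have "measure M {..<c} \<le> 1/2"
    using cdf_at_left[of c] by (intro tendsto_upperbound) auto
  ultimately show ?thesis by (intro exI[of _ c]) simp
qed

lemma abs_diff_eq_nn_integral_indicator:
  fixes a b :: real
  shows "ennreal \<bar>a - b\<bar> = (\<integral>\<^sup>+ s. indicator {b..<a} s + indicator {a..<b} s \<partial>lborel)"
proof -
  have "ennreal \<bar>a - b\<bar> = ennreal (a - b) + ennreal (b - a)"
    by (cases "b \<le> a") (auto simp: ennreal_neg)
  also have "\<dots> = (\<integral>\<^sup>+ s. indicator {b..<a} s \<partial>lborel) + (\<integral>\<^sup>+ s. indicator {a..<b} s \<partial>lborel)"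
    by (cases "b \<le> a") (auto simp: ennreal_neg)
  finally show ?thesis
    by (simp add: nn_integral_add)
qed

lemma (in sigma_finite_measure) borel_measurable_emeasure_superlevel:
  fixes g :: "'a \<Rightarrow> real"
  assumes [measurable]: "g \<in> borel_measurable M"
  shows "(\<lambda>s. emeasure M {x \<in> space M. s < g x}) \<in> borel_measurable borel"
proof -
  have "(\<lambda>z. indicator {x \<in> space M. fst z < g x} (snd z) :: ennreal) \<in> borel_measurable (borel \<Otimes>\<^sub>M M)"
    by (simp add: indicator_def space_pair_measure)
  from borel_measurable_nn_integral_fst[OF this] show ?thesis by simp
qed

lemma (in sigma_finite_measure) nn_integral_layer_cake:
  assumes g[measurable]: "g \<in> borel_measurable M" and nonneg: "\<And>x. x \<in> space M \<Longrightarrow> 0 \<le> g x"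
  shows "(\<integral>\<^sup>+ x. ennreal (g x) \<partial>M) =
    (\<integral>\<^sup>+ s. indicator {0..} s * emeasure M {x \<in> space M. s < g x} \<partial>lborel)"
proof -
  interpret pair_sigma_finite lborel M
    by (intro pair_sigma_finite.intro lborel.sigma_finite_measure_axioms sigma_finite_measure_axioms)
  have "(\<integral>\<^sup>+ x. ennreal (g x) \<partial>M) = (\<integral>\<^sup>+ x. \<integral>\<^sup>+ s. indicator {0..<g x} s \<partial>lborel \<partial>M)"
    using nonneg by (intro nn_integral_cong) (simp add: ennreal_neg)
  also have "\<dots> = (\<integral>\<^sup>+ x. \<integral>\<^sup>+ s. indicator {0..} s * indicator {x \<in> space M. s < g x} x \<partial>lborel \<partial>M)"
    by (intro nn_integral_cong) (auto simp: indicator_def)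
  also have "\<dots> = (\<integral>\<^sup>+ s. \<integral>\<^sup>+ x. indicator {0..} s * indicator {x \<in> space M. s < g x} x \<partial>M \<partial>lborel)"
    by (rule Fubini') measurable
  also have "\<dots> = (\<integral>\<^sup>+ s. indicator {0..} s * emeasure M {x \<in> space M. s < g x} \<partial>lborel)"
    by (intro nn_integral_cong) (simp add: nn_integral_cmult)
  finally show ?thesis .
qed

lemma sets_dmeasure[simp]: "sets (dmeasure q) = sets borel"
  and space_dmeasure[simp]: "space (dmeasure q) = UNIV"
  by (simp_all add: dmeasure_def)

lemma measurable_dmeasure[simp]: "measurable (dmeasure q) M = measurable borel M"
  by (rule measurable_cong_sets) simp_all

lemma emeasure_dmeasure:
  assumes [measurable]: "q \<in> borel_measurable borel" "A \<in> sets borel"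
  shows "emeasure (dmeasure q) A = (\<integral>\<^sup>+ x. ennreal (q x) * indicator A x \<partial>lborel)"
  unfolding dmeasure_def by (subst emeasure_density) auto

lemma nn_integral_dmeasure:
  assumes [measurable]: "q \<in> borel_measurable borel" "g \<in> borel_measurable borel"
  shows "(\<integral>\<^sup>+ x. g x \<partial>dmeasure q) = (\<integral>\<^sup>+ x. ennreal (q x) * g x \<partial>lborel)"
  unfolding dmeasure_def by (subst nn_integral_density) auto

lemma prob_space_dmeasure: "prob_density q \<Longrightarrow> prob_space (dmeasure q)"
  unfolding prob_density_def dmeasure_def
  by (intro prob_spaceI) (simp add: emeasure_density measurable_lborel1)

lemma measure_dmeasure_hyperplane:
  fixes q :: "real ^ 'n::finite \<Rightarrow> real"
  assumes [measurable]: "q \<in> borel_measurable borel"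
  shows "measure (dmeasure q) {x. x $ k = c} = 0"
proof -
  have "negligible {x::real ^ 'n. x $ k = c}"
    using negligible_standard_hyperplane[of "axis k (1::real)" c] by (simp add: cart_eq_inner_axis)
  then have "{x::real ^ 'n. x $ k = c} \<in> null_sets lborel"
    unfolding negligible_iff_null_sets by (subst (asm) null_sets_completion_iff) auto
  then show ?thesis
    by (simp add: measure_def emeasure_dmeasure nn_integral_null_set)
qed

lemma abs_measure_diff_le_TV:
  assumes "prob_space \<mu>" "prob_space \<nu>" "B \<in> sets borel"
  shows "\<bar>measure \<mu> B - measure \<nu> B\<bar> \<le> TV \<mu> \<nu>"
  unfolding TV_def
proof (rule cSUP_upper[OF assms(3)])
  have "\<bar>measure \<mu> A - measure \<nu> A\<bar> \<le> 1" for A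
    using prob_space.prob_le_1[OF assms(1), of A] prob_space.prob_le_1[OF assms(2), of A]
      measure_nonneg[of \<mu> A] measure_nonneg[of \<nu> A] by linarith
  then show "bdd_above ((\<lambda>A. \<bar>measure \<mu> A - measure \<nu> A\<bar>) ` sets borel)"
    by (rule bdd_aboveI2)
qed

lemma set_dist_ge:
  assumes "S1 \<noteq> {}" "S2 \<noteq> {}" "\<And>x y. x \<in> S1 \<Longrightarrow> y \<in> S2 \<Longrightarrow> r \<le> norm (x - y)"
  shows "r \<le> set_dist S1 S2"
  unfolding set_dist_def using assms by (intro cInf_greatest) auto

section \<open>Cheeger's inequality for reversible kernels\<close>

locale reversible_kernel =
  fixes p :: "real ^ 'n::finite \<Rightarrow> real" and P :: "real ^ 'n \<Rightarrow> real ^ 'n \<Rightarrow> real"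
  assumes density: "prob_density p" and kernel: "markov_kernel_density P"
    and reversible: "reversible P p"
begin

abbreviation \<pi> :: "(real ^ 'n) measure" where "\<pi> \<equiv> dmeasure p"

sublocale \<pi>: prob_space \<pi>
  by (rule prob_space_dmeasure[OF density])

lemma prob_UNIV[simp]: "measure \<pi> UNIV = 1"
  using \<pi>.prob_space by simp

lemma p_borel[measurable]: "p \<in> borel_measurable borel"
  using density unfolding prob_density_def by (simp add: measurable_lborel1)

lemma p_nonneg[simp]: "0 \<le> p x"
  using density unfolding prob_density_def by simp

lemma P_borel[measurable]: "(\<lambda>(x, y). P x y) \<in> borel_measurable (borel \<Otimes>\<^sub>M borel)"
proof -
  have "(\<lambda>(x, y). P x y) \<in> borel_measurable (lborel \<Otimes>\<^sub>M lborel)"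
    using kernel unfolding markov_kernel_density_def by simp
  then show ?thesis
    by (simp add: measurable_cong_sets[OF sets_pair_measure_cong[OF sets_lborel sets_lborel] refl])
qed

lemma P_nonneg[simp]: "0 \<le> P x y"
  using kernel unfolding markov_kernel_density_def by simp

lemma prob_density_P: "prob_density (P x)"
  using kernel unfolding markov_kernel_density_def prob_density_def by (simp add: measurable_lborel1)

lemma prob_space_P: "prob_space (dmeasure (P x))"
  by (rule prob_space_dmeasure[OF prob_density_P])

lemma measure_P_borel[measurable]:
  assumes [measurable]: "B \<in> sets borel"
  shows "(\<lambda>x. measure (dmeasure (P x)) B) \<in> borel_measurable borel"
  by (simp add: measure_def emeasure_dmeasure)

lemma measure_P_Compl:
  "B \<in> sets borel \<Longrightarrow> measure (dmeasure (P x)) (-B) = 1 - measure (dmeasure (P x)) B"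
  using prob_space.prob_compl[OF prob_space_P, of B x] by (simp add: Compl_eq_Diff_UNIV)

definition flow :: "(real ^ 'n \<Rightarrow> real ^ 'n \<Rightarrow> ennreal) \<Rightarrow> ennreal" where
  "flow g = (\<integral>\<^sup>+ x. \<integral>\<^sup>+ y. ennreal (p x * P x y) * g x y \<partial>lborel \<partial>lborel)"

lemma flow_swap:
  assumes [measurable]: "(\<lambda>(x, y). g x y) \<in> borel_measurable (borel \<Otimes>\<^sub>M borel)"
  shows "flow (\<lambda>x y. g y x) = flow g"
proof -
  have "flow g = (\<integral>\<^sup>+ y. \<integral>\<^sup>+ x. ennreal (p x * P x y) * g x y \<partial>lborel \<partial>lborel)"
    unfolding flow_def by (rule lborel_pair.Fubini'[symmetric]) simp
  also have "\<dots> = flow (\<lambda>x y. g y x)"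
    using reversible unfolding flow_def reversible_def by simp
  finally show ?thesis ..
qed

lemma flow_fst:
  assumes [measurable]: "g \<in> borel_measurable borel"
  shows "flow (\<lambda>x y. g x) = (\<integral>\<^sup>+ x. g x \<partial>\<pi>)"
proof -
  have "(\<integral>\<^sup>+ y. ennreal (p x * P x y) * g x \<partial>lborel) = ennreal (p x) * g x" for x
  proof -
    have "(\<integral>\<^sup>+ y. ennreal (p x * P x y) * g x \<partial>lborel)
        = ennreal (p x) * g x * (\<integral>\<^sup>+ y. ennreal (P x y) \<partial>lborel)"
      by (subst nn_integral_cmult[symmetric]) (auto intro!: nn_integral_cong simp: ennreal_mult mult_ac)
    then show ?thesis
      using kernel unfolding markov_kernel_density_def by simp
  qed
  then show ?thesis unfolding flow_def by (simp add: nn_integral_dmeasure)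
qed

lemma flow_snd:
  assumes [measurable]: "g \<in> borel_measurable borel"
  shows "flow (\<lambda>x y. g y) = (\<integral>\<^sup>+ x. g x \<partial>\<pi>)"
  using flow_swap[of "\<lambda>x y. g x"] by (simp add: flow_fst)

lemma flow_add:
  assumes [measurable]: "(\<lambda>(x, y). g1 x y) \<in> borel_measurable (borel \<Otimes>\<^sub>M borel)"
    "(\<lambda>(x, y). g2 x y) \<in> borel_measurable (borel \<Otimes>\<^sub>M borel)"
  shows "flow (\<lambda>x y. g1 x y + g2 x y) = flow g1 + flow g2"
proof -
  have [measurable]: "(\<lambda>z. g1 (fst z) (snd z)) \<in> borel_measurable (borel \<Otimes>\<^sub>M borel)"
    "(\<lambda>z. g2 (fst z) (snd z)) \<in> borel_measurable (borel \<Otimes>\<^sub>M borel)"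
    using assms by (simp_all add: case_prod_beta')
  have [measurable]: "g1 x \<in> borel_measurable borel" "g2 x \<in> borel_measurable borel" for x
    by measurable
  show ?thesis
    unfolding flow_def distrib_left
    by (subst nn_integral_add[symmetric]; measurable; intro nn_integral_cong nn_integral_add; measurable)
qed

lemma flow_cmult:
  assumes [measurable]: "(\<lambda>(x, y). g x y) \<in> borel_measurable (borel \<Otimes>\<^sub>M borel)"
  shows "flow (\<lambda>x y. c * g x y) = c * flow g"
proof -
  have [measurable]: "(\<lambda>z. g (fst z) (snd z)) \<in> borel_measurable (borel \<Otimes>\<^sub>M borel)"
    using assms by (simp add: case_prod_beta')
  have "flow (\<lambda>x y. c * g x y) = (\<integral>\<^sup>+ x. c * (\<integral>\<^sup>+ y. ennreal (p x * P x y) * g x y \<partial>lborel) \<partial>lborel)"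
    unfolding flow_def by (intro nn_integral_cong) (simp add: mult.left_commute nn_integral_cmult[symmetric])
  also have "\<dots> = c * flow g" unfolding flow_def by (rule nn_integral_cmult) measurable
  finally show ?thesis .
qed

lemma flow_mono: "(\<And>x y. g1 x y \<le> g2 x y) \<Longrightarrow> flow g1 \<le> flow g2"
  unfolding flow_def by (intro nn_integral_mono mult_left_mono) auto

lemma flow_nn_integral:
  assumes G[measurable]: "(\<lambda>(s, x, y). G s x y) \<in> borel_measurable (borel \<Otimes>\<^sub>M (borel \<Otimes>\<^sub>M borel))"
  shows "flow (\<lambda>x y. \<integral>\<^sup>+ s. G s x y \<partial>lborel) = (\<integral>\<^sup>+ s. flow (G s) \<partial>lborel)"
proof -
  have G'[measurable]:
    "(\<lambda>z. G (fst z) (fst (snd z)) (snd (snd z))) \<in> borel_measurable (borel \<Otimes>\<^sub>M (borel \<Otimes>\<^sub>M borel))"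
    using G by (simp add: case_prod_beta')
  have [measurable]: "(\<lambda>s. G s x y) \<in> borel_measurable borel" for x y
    using measurable_compose[OF _ G', of "\<lambda>s. (s, x, y)" borel] by simp
  have [measurable]: "(\<lambda>z. G (fst z) x (snd z)) \<in> borel_measurable (borel \<Otimes>\<^sub>M borel)" for x
    using measurable_compose[OF _ G', of "\<lambda>z. (fst z, x, snd z)" "borel \<Otimes>\<^sub>M borel"] by simp
  have [measurable]:
    "(\<lambda>z. G (snd (fst z)) (fst (fst z)) (snd z)) \<in> borel_measurable ((borel \<Otimes>\<^sub>M borel) \<Otimes>\<^sub>M borel)"
    using measurable_compose[OF _ G', of "\<lambda>z. (snd (fst z), fst (fst z), snd z)"
        "(borel \<Otimes>\<^sub>M borel) \<Otimes>\<^sub>M borel"]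
    by simp
  have "flow (\<lambda>x y. \<integral>\<^sup>+ s. G s x y \<partial>lborel)
      = (\<integral>\<^sup>+ x. \<integral>\<^sup>+ y. \<integral>\<^sup>+ s. ennreal (p x * P x y) * G s x y \<partial>lborel \<partial>lborel \<partial>lborel)"
    unfolding flow_def by (intro nn_integral_cong nn_integral_cmult[symmetric]) measurable
  also have "\<dots> = (\<integral>\<^sup>+ x. \<integral>\<^sup>+ s. \<integral>\<^sup>+ y. ennreal (p x * P x y) * G s x y \<partial>lborel \<partial>lborel \<partial>lborel)"
    by (intro nn_integral_cong lborel_pair.Fubini') measurable
  also have "\<dots> = (\<integral>\<^sup>+ s. flow (G s) \<partial>lborel)"
    unfolding flow_def by (rule lborel_pair.Fubini'[symmetric]) measurable
  finally show ?thesis .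
qed

definition ergodic_flow :: "(real ^ 'n) set \<Rightarrow> ennreal" where
  "ergodic_flow A = flow (\<lambda>x y. indicator A x * indicator (-A) y)"

lemma ergodic_flow_Compl:
  assumes [measurable]: "A \<in> sets borel"
  shows "ergodic_flow (-A) = ergodic_flow A"
  unfolding ergodic_flow_def using flow_swap[of "\<lambda>x y. indicator A x * indicator (-A) y"]
  by (simp add: mult.commute)

lemma ergodic_flow_eq:
  assumes [measurable]: "A \<in> sets borel"
  shows "ergodic_flow A = (\<integral>\<^sup>+ x. indicator A x * ennreal (measure (dmeasure (P x)) (-A)) \<partial>\<pi>)"
proof -
  have "(\<integral>\<^sup>+ y. ennreal (p x * P x y) * (indicator A x * indicator (-A) y) \<partial>lborel)
      = ennreal (p x) * (indicator A x * ennreal (measure (dmeasure (P x)) (-A)))" for x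
  proof -
    have "(\<integral>\<^sup>+ y. ennreal (p x * P x y) * (indicator A x * indicator (-A) y) \<partial>lborel)
        = (\<integral>\<^sup>+ y. (ennreal (p x) * indicator A x) * (ennreal (P x y) * indicator (-A) y) \<partial>lborel)"
      by (intro nn_integral_cong) (simp add: ennreal_mult mult_ac)
    also have "\<dots> = ennreal (p x) * indicator A x * emeasure (dmeasure (P x)) (-A)"
      by (subst nn_integral_cmult) (simp_all add: emeasure_dmeasure)
    finally show ?thesis
      by (simp add: finite_measure.emeasure_eq_measure[OF prob_space.finite_measure[OF prob_space_P]] mult_ac)
  qed
  then show ?thesis
    unfolding ergodic_flow_def flow_def by (simp add: nn_integral_dmeasure)
qed

lemma ergodic_flow_ge_escape:
  assumes [measurable]: "A \<in> sets borel" and r: "0 \<le> r"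
  shows "ennreal (r * measure \<pi> {x \<in> A. r \<le> measure (dmeasure (P x)) (-A)}) \<le> ergodic_flow A"
proof -
  define B where "B = {x \<in> A. r \<le> measure (dmeasure (P x)) (-A)}"
  have [measurable]: "B \<in> sets borel" unfolding B_def by measurable
  have "ennreal (r * measure \<pi> B) = (\<integral>\<^sup>+ x. ennreal r * indicator B x \<partial>\<pi>)"
    using r by (simp add: \<pi>.emeasure_eq_measure ennreal_mult nn_integral_cmult)
  also have "\<dots> \<le> (\<integral>\<^sup>+ x. indicator A x * ennreal (measure (dmeasure (P x)) (-A)) \<partial>\<pi>)"
    by (intro nn_integral_mono) (auto simp: B_def indicator_def ennreal_leI)
  also have "\<dots> = ergodic_flow A"
    by (rule ergodic_flow_eq[symmetric]) simp
  finally show ?thesis unfolding B_def .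
qed

definition conductance_ge :: "real \<Rightarrow> bool" where
  "conductance_ge h \<longleftrightarrow>
    (\<forall>A \<in> sets borel. measure \<pi> A \<le> 1/2 \<longrightarrow> ennreal (h * measure \<pi> A) \<le> ergodic_flow A)"

lemma flow_abs_diff_coarea:
  assumes [measurable]: "g \<in> borel_measurable borel"
  shows "flow (\<lambda>x y. ennreal \<bar>g x - g y\<bar>) = (\<integral>\<^sup>+ s. 2 * ergodic_flow {x. s < g x} \<partial>lborel)"
proof -
  define G :: "real \<Rightarrow> real ^ 'n \<Rightarrow> real ^ 'n \<Rightarrow> ennreal"
    where "G s x y = indicator {x. s < g x} x * indicator (- {x. s < g x}) y" for s x y
  have [measurable]: "(\<lambda>(s, x, y). G s x y + G s y x) \<in> borel_measurable (borel \<Otimes>\<^sub>M (borel \<Otimes>\<^sub>M borel))"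
    "(\<lambda>(x, y). G s x y) \<in> borel_measurable (borel \<Otimes>\<^sub>M borel)" for s
    unfolding G_def by measurable
  have "flow (\<lambda>x y. ennreal \<bar>g x - g y\<bar>) = flow (\<lambda>x y. \<integral>\<^sup>+ s. G s x y + G s y x \<partial>lborel)"
    unfolding abs_diff_eq_nn_integral_indicator G_def
    by (intro arg_cong[where f=flow] ext nn_integral_cong) (auto simp: indicator_def)
  also have "\<dots> = (\<integral>\<^sup>+ s. flow (\<lambda>x y. G s x y + G s y x) \<partial>lborel)"
    by (rule flow_nn_integral) measurable
  also have "\<dots> = (\<integral>\<^sup>+ s. flow (G s) + flow (\<lambda>x y. G s y x) \<partial>lborel)"
    by (intro nn_integral_cong flow_add) measurable
  also have "\<dots> = (\<integral>\<^sup>+ s. 2 * ergodic_flow {x. s < g x} \<partial>lborel)"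
    using flow_swap[of "G _"] by (simp add: mult_2 ergodic_flow_def G_def[abs_def])
  finally show ?thesis .
qed

lemma flow_abs_diff_sq_ge:
  assumes h: "conductance_ge h" "0 \<le> h"
    and f[measurable]: "f \<in> borel_measurable borel" and nonneg: "\<And>x. 0 \<le> f x"
    and small: "measure \<pi> {x. 0 < f x} \<le> 1/2"
  shows "ennreal (2 * h) * (\<integral>\<^sup>+ x. ennreal ((f x)\<^sup>2) \<partial>\<pi>)
    \<le> flow (\<lambda>x y. ennreal \<bar>(f x)\<^sup>2 - (f y)\<^sup>2\<bar>)"
proof -
  have [measurable]: "(\<lambda>s. emeasure \<pi> {x. s < (f x)\<^sup>2}) \<in> borel_measurable borel"
    using \<pi>.borel_measurable_emeasure_superlevel[of "\<lambda>x. (f x)\<^sup>2"] by simp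
  have level: "ennreal (h * measure \<pi> {x. s < (f x)\<^sup>2}) * indicator {0..} s \<le> ergodic_flow {x. s < (f x)\<^sup>2}"
    for s
  proof (cases "0 \<le> s")
    case True
    have "{x. s < (f x)\<^sup>2} \<subseteq> {x. 0 < f x}"
      using nonneg True by (auto simp: order.strict_iff_order)
    then have "measure \<pi> {x. s < (f x)\<^sup>2} \<le> measure \<pi> {x. 0 < f x}"
      by (rule \<pi>.finite_measure_mono) simp
    moreover have "{x. s < (f x)\<^sup>2} \<in> sets borel" by measurable
    ultimately show ?thesis
      using h small True unfolding conductance_ge_def by simp
  qed simp
  have "ennreal (2 * h) * (\<integral>\<^sup>+ x. ennreal ((f x)\<^sup>2) \<partial>\<pi>)
      = ennreal (2 * h) * (\<integral>\<^sup>+ s. indicator {0..} s * emeasure \<pi> {x. s < (f x)\<^sup>2} \<partial>lborel)"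
    by (subst \<pi>.nn_integral_layer_cake) simp_all
  also have "\<dots> = (\<integral>\<^sup>+ s. ennreal (2 * h) * (indicator {0..} s * emeasure \<pi> {x. s < (f x)\<^sup>2}) \<partial>lborel)"
    by (rule nn_integral_cmult[symmetric]) measurable
  also have "\<dots> = (\<integral>\<^sup>+ s. 2 * (ennreal (h * measure \<pi> {x. s < (f x)\<^sup>2}) * indicator {0..} s) \<partial>lborel)"
    using h by (intro nn_integral_cong) (simp add: \<pi>.emeasure_eq_measure ennreal_mult' ennreal_mult mult_ac)
  also have "\<dots> \<le> (\<integral>\<^sup>+ s. 2 * ergodic_flow {x. s < (f x)\<^sup>2} \<partial>lborel)"
    by (intro nn_integral_mono mult_left_mono level) simp
  also have "\<dots> = flow (\<lambda>x y. ennreal \<bar>(f x)\<^sup>2 - (f y)\<^sup>2\<bar>)"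
    by (rule flow_abs_diff_coarea[symmetric]) measurable
  finally show ?thesis .
qed

lemma flow_diff_sq_ge_nonneg:
  assumes h: "conductance_ge h" "0 \<le> h"
    and f[measurable]: "f \<in> borel_measurable borel" and nonneg: "\<And>x. 0 \<le> f x"
    and small: "measure \<pi> {x. 0 < f x} \<le> 1/2"
    and finite: "(\<integral>\<^sup>+ x. ennreal ((f x)\<^sup>2) \<partial>\<pi>) < \<infinity>"
  shows "ennreal (h\<^sup>2) * (\<integral>\<^sup>+ x. ennreal ((f x)\<^sup>2) \<partial>\<pi>) \<le> flow (\<lambda>x y. ennreal ((f x - f y)\<^sup>2))"
proof (cases "h = 0")
  case False
  with h have h_pos: "0 < h" by simp
  define E where "E = (\<integral>\<^sup>+ x. ennreal ((f x)\<^sup>2) \<partial>\<pi>)"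
  define D where "D = flow (\<lambda>x y. ennreal ((f x - f y)\<^sup>2))"
  have amgm: "ennreal \<bar>(f x)\<^sup>2 - (f y)\<^sup>2\<bar> \<le> ennreal (1/h) * ennreal ((f x - f y)\<^sup>2)
      + ennreal (h/2) * ennreal ((f x)\<^sup>2) + ennreal (h/2) * ennreal ((f y)\<^sup>2)" for x y
  proof -
    have "ennreal \<bar>(f x)\<^sup>2 - (f y)\<^sup>2\<bar> \<le> ennreal ((f x - f y)\<^sup>2 / h + h/2 * (f x)\<^sup>2 + h/2 * (f y)\<^sup>2)"
      using abs_diff_squares_le[OF h_pos] by (rule ennreal_leI)
    also have "\<dots> = ennreal (1/h) * ennreal ((f x - f y)\<^sup>2) + ennreal (h/2) * ennreal ((f x)\<^sup>2)
        + ennreal (h/2) * ennreal ((f y)\<^sup>2)"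
      using h_pos by (simp add: ennreal_plus ennreal_mult[symmetric])
    finally show ?thesis .
  qed
  have "ennreal (2 * h) = ennreal h + ennreal h"
    unfolding mult_2 using h_pos by (intro ennreal_plus) auto
  then have "ennreal h * E + ennreal h * E = ennreal (2 * h) * E"
    by (simp add: distrib_right)
  also have "\<dots> \<le> flow (\<lambda>x y. ennreal \<bar>(f x)\<^sup>2 - (f y)\<^sup>2\<bar>)"
    unfolding E_def using h f nonneg small by (rule flow_abs_diff_sq_ge)
  also have "\<dots> \<le> flow (\<lambda>x y. ennreal (1/h) * ennreal ((f x - f y)\<^sup>2)
      + ennreal (h/2) * ennreal ((f x)\<^sup>2) + ennreal (h/2) * ennreal ((f y)\<^sup>2))"
    using amgm by (rule flow_mono)
  also have "\<dots> = ennreal (1/h) * D + ennreal (h/2) * E + ennreal (h/2) * E"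
    unfolding D_def E_def by (simp add: flow_add flow_cmult flow_fst flow_snd)
  also have "\<dots> = ennreal h * E + ennreal (1/h) * D"
    using h_pos by (simp add: add.assoc distrib_right[symmetric] ennreal_plus[symmetric] add.commute
        del: ennreal_plus)
  finally have "ennreal h * E \<le> ennreal (1/h) * D"
    using finite unfolding E_def by (auto simp: ennreal_add_left_cancel_le ennreal_mult_eq_top_iff)
  then have "ennreal h * (ennreal h * E) \<le> ennreal h * ennreal (1/h) * D"
    by (simp add: mult_left_mono mult.assoc)
  also have "ennreal h * ennreal (1/h) = 1"
    using h_pos by (simp flip: ennreal_mult)
  finally show ?thesis
    using h_pos unfolding D_def E_def by (simp add: power2_eq_square ennreal_mult mult.assoc)
qed simp

lemma median_exists_borel:
  fixes u :: "real ^ 'n \<Rightarrow> real"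
  assumes [measurable]: "u \<in> borel_measurable borel"
  shows "\<exists>c. measure \<pi> {x. c < u x} \<le> 1/2 \<and> measure \<pi> {x. u x < c} \<le> 1/2"
proof -
  interpret real_distribution "distr \<pi> borel u" by simp
  obtain c where "measure (distr \<pi> borel u) {c<..} \<le> 1/2" "measure (distr \<pi> borel u) {..<c} \<le> 1/2"
    using median_exists by blast
  then show ?thesis by (auto simp: measure_distr vimage_def)
qed

lemma flow_diff_sq_ge_median_zero:
  assumes h: "conductance_ge h" "0 \<le> h" and v[measurable]: "v \<in> borel_measurable borel"
    and median: "measure \<pi> {x. 0 < v x} \<le> 1/2" "measure \<pi> {x. v x < 0} \<le> 1/2"
    and finite: "(\<integral>\<^sup>+ x. ennreal ((v x)\<^sup>2) \<partial>\<pi>) < \<infinity>"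
  shows "ennreal (h\<^sup>2) * (\<integral>\<^sup>+ x. ennreal ((v x)\<^sup>2) \<partial>\<pi>) \<le> flow (\<lambda>x y. ennreal ((v x - v y)\<^sup>2))"
proof -
  define f g where "f x = max (v x) 0" and "g x = max (- v x) 0" for x
  have [measurable]: "f \<in> borel_measurable borel" "g \<in> borel_measurable borel"
    unfolding f_def g_def by measurable
  have sq: "(v x)\<^sup>2 = (f x)\<^sup>2 + (g x)\<^sup>2" for x
    unfolding f_def g_def by (rule pos_part_sq_plus_neg_part_sq[symmetric])
  have "{x. 0 < f x} = {x. 0 < v x}" "{x. 0 < g x} = {x. v x < 0}"
    unfolding f_def g_def by auto
  with median have small: "measure \<pi> {x. 0 < f x} \<le> 1/2" "measure \<pi> {x. 0 < g x} \<le> 1/2"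
    by simp_all
  have "(\<integral>\<^sup>+ x. ennreal ((f x)\<^sup>2) \<partial>\<pi>) \<le> (\<integral>\<^sup>+ x. ennreal ((v x)\<^sup>2) \<partial>\<pi>)"
    "(\<integral>\<^sup>+ x. ennreal ((g x)\<^sup>2) \<partial>\<pi>) \<le> (\<integral>\<^sup>+ x. ennreal ((v x)\<^sup>2) \<partial>\<pi>)"
    by (intro nn_integral_mono ennreal_leI; simp add: sq)+
  with finite have fin: "(\<integral>\<^sup>+ x. ennreal ((f x)\<^sup>2) \<partial>\<pi>) < \<infinity>" "(\<integral>\<^sup>+ x. ennreal ((g x)\<^sup>2) \<partial>\<pi>) < \<infinity>"
    by simp_all
  have "ennreal (h\<^sup>2) * (\<integral>\<^sup>+ x. ennreal ((v x)\<^sup>2) \<partial>\<pi>)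
      = ennreal (h\<^sup>2) * (\<integral>\<^sup>+ x. ennreal ((f x)\<^sup>2) \<partial>\<pi>) + ennreal (h\<^sup>2) * (\<integral>\<^sup>+ x. ennreal ((g x)\<^sup>2) \<partial>\<pi>)"
    by (simp add: sq nn_integral_add distrib_left)
  also have "\<dots> \<le> flow (\<lambda>x y. ennreal ((f x - f y)\<^sup>2)) + flow (\<lambda>x y. ennreal ((g x - g y)\<^sup>2))"
    by (intro add_mono flow_diff_sq_ge_nonneg[OF h] small fin) (simp_all add: f_def g_def)
  also have "\<dots> = flow (\<lambda>x y. ennreal ((f x - f y)\<^sup>2) + ennreal ((g x - g y)\<^sup>2))"
    by (rule flow_add[symmetric]) measurable
  also have "\<dots> \<le> flow (\<lambda>x y. ennreal ((v x - v y)\<^sup>2))"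
    using pos_neg_parts_diff_sq_le unfolding f_def g_def
    by (intro flow_mono) (simp add: ennreal_plus[symmetric] del: ennreal_plus)
  finally show ?thesis .
qed

definition edge_density :: "(real ^ 'n) \<times> (real ^ 'n) \<Rightarrow> real" where
  "edge_density z = p (fst z) * P (fst z) (snd z)"

lemma edge_density_borel[measurable]: "edge_density \<in> borel_measurable (borel \<Otimes>\<^sub>M borel)"
  unfolding edge_density_def by measurable

lemma edge_density_nonneg[simp]: "0 \<le> edge_density z"
  unfolding edge_density_def by simp

lemma flow_eq_nn_integral_edge_density:
  assumes [measurable]: "(\<lambda>z. g (fst z) (snd z)) \<in> borel_measurable (borel \<Otimes>\<^sub>M borel)"
  shows "flow (\<lambda>x y. ennreal (g x y)) =
    (\<integral>\<^sup>+ z. ennreal (edge_density z * g (fst z) (snd z)) \<partial>(lborel \<Otimes>\<^sub>M lborel))"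
  unfolding flow_def edge_density_def
  using lborel.nn_integral_fst[where f="\<lambda>z. ennreal (p (fst z) * P (fst z) (snd z) * g (fst z) (snd z))"]
  by (simp add: ennreal_mult')

lemma has_bochner_integral_edge_density_sq:
  assumes [measurable]: "u \<in> borel_measurable borel" and sq_int: "integrable \<pi> (\<lambda>x. (u x)\<^sup>2)"
  shows "has_bochner_integral (lborel \<Otimes>\<^sub>M lborel) (\<lambda>z. edge_density z * (u (fst z))\<^sup>2) (\<integral> x. (u x)\<^sup>2 \<partial>\<pi>)"
    and "has_bochner_integral (lborel \<Otimes>\<^sub>M lborel) (\<lambda>z. edge_density z * (u (snd z))\<^sup>2) (\<integral> x. (u x)\<^sup>2 \<partial>\<pi>)"
proof -
  have nn: "(\<integral>\<^sup>+ x. ennreal ((u x)\<^sup>2) \<partial>\<pi>) = ennreal (\<integral> x. (u x)\<^sup>2 \<partial>\<pi>)"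
    using sq_int by (subst nn_integral_eq_integral) auto
  show "has_bochner_integral (lborel \<Otimes>\<^sub>M lborel) (\<lambda>z. edge_density z * (u (fst z))\<^sup>2) (\<integral> x. (u x)\<^sup>2 \<partial>\<pi>)"
    using flow_eq_nn_integral_edge_density[of "\<lambda>x y. (u x)\<^sup>2"] flow_fst[of "\<lambda>x. ennreal ((u x)\<^sup>2)"] nn
    by (intro has_bochner_integral_nn_integral) auto
  show "has_bochner_integral (lborel \<Otimes>\<^sub>M lborel) (\<lambda>z. edge_density z * (u (snd z))\<^sup>2) (\<integral> x. (u x)\<^sup>2 \<partial>\<pi>)"
    using flow_eq_nn_integral_edge_density[of "\<lambda>x y. (u y)\<^sup>2"] flow_snd[of "\<lambda>x. ennreal ((u x)\<^sup>2)"] nn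
    by (intro has_bochner_integral_nn_integral) auto
qed

lemma kernel_apply_borel[measurable]:
  assumes [measurable]: "u \<in> borel_measurable borel"
  shows "kernel_apply P u \<in> borel_measurable borel"
proof -
  have "(\<lambda>x. \<integral> y. P x y * u y \<partial>lborel) \<in> borel_measurable lborel"
    by measurable
  then show ?thesis unfolding kernel_apply_def[abs_def] by simp
qed

lemma has_bochner_integral_edge_density_cross:
  assumes [measurable]: "u \<in> borel_measurable borel" and sq_int: "integrable \<pi> (\<lambda>x. (u x)\<^sup>2)"
  shows "has_bochner_integral (lborel \<Otimes>\<^sub>M lborel) (\<lambda>z. edge_density z * (u (fst z) * u (snd z)))
    (\<integral> x. u x * kernel_apply P u x \<partial>\<pi>)"
proof -
  let ?L = "lborel \<Otimes>\<^sub>M lborel :: ((real ^ 'n) \<times> (real ^ 'n)) measure"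
  note sq = has_bochner_integral_edge_density_sq[OF assms]
  have int: "integrable ?L (\<lambda>z. edge_density z * (u (fst z) * u (snd z)))"
  proof (rule Bochner_Integration.integrable_bound)
    show "integrable ?L (\<lambda>z. (edge_density z * (u (fst z))\<^sup>2 + edge_density z * (u (snd z))\<^sup>2) / 2)"
      using sq[THEN integrable.intros] by (intro integrable_divide Bochner_Integration.integrable_add)
    show "AE z in ?L. norm (edge_density z * (u (fst z) * u (snd z)))
        \<le> norm ((edge_density z * (u (fst z))\<^sup>2 + edge_density z * (u (snd z))\<^sup>2) / 2)"
    proof (intro AE_I2)
      fix z
      have "2 * \<bar>u (fst z) * u (snd z)\<bar> \<le> (u (fst z))\<^sup>2 + (u (snd z))\<^sup>2"
        using zero_le_power2[of "\<bar>u (fst z)\<bar> - \<bar>u (snd z)\<bar>"]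
        by (simp add: power2_eq_square algebra_simps abs_mult)
      then have "edge_density z * (2 * \<bar>u (fst z) * u (snd z)\<bar>) \<le> edge_density z * ((u (fst z))\<^sup>2 + (u (snd z))\<^sup>2)"
        by (intro mult_left_mono) auto
      then show "norm (edge_density z * (u (fst z) * u (snd z)))
          \<le> norm ((edge_density z * (u (fst z))\<^sup>2 + edge_density z * (u (snd z))\<^sup>2) / 2)"
        by (simp add: abs_mult algebra_simps)
    qed
  qed measurable
  have "(\<integral> z. edge_density z * (u (fst z) * u (snd z)) \<partial>?L)
      = (\<integral> x. \<integral> y. (p x * u x) * (P x y * u y) \<partial>lborel \<partial>lborel)"
    by (subst lborel_pair.integral_fst'[OF int, symmetric]) (simp add: edge_density_def mult_ac)
  also have "\<dots> = (\<integral> x. p x * (u x * kernel_apply P u x) \<partial>lborel)"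
    unfolding kernel_apply_def by (simp add: mult.assoc)
  also have "\<dots> = (\<integral> x. u x * kernel_apply P u x \<partial>\<pi>)"
    unfolding dmeasure_def by (subst integral_density) auto
  finally show ?thesis
    using int by (simp add: has_bochner_integral_iff)
qed

lemma flow_diff_sq_eq:
  assumes [measurable]: "u \<in> borel_measurable borel" and sq_int: "integrable \<pi> (\<lambda>x. (u x)\<^sup>2)"
  defines "D \<equiv> 2 * (\<integral> x. (u x)\<^sup>2 \<partial>\<pi>) - 2 * (\<integral> x. u x * kernel_apply P u x \<partial>\<pi>)"
  shows "flow (\<lambda>x y. ennreal ((u x - u y)\<^sup>2)) = ennreal D" and "0 \<le> D"
proof -
  let ?L = "lborel \<Otimes>\<^sub>M lborel :: ((real ^ 'n) \<times> (real ^ 'n)) measure"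
  note sq = has_bochner_integral_edge_density_sq[OF assms(1,2)]
  have "has_bochner_integral ?L (\<lambda>z. edge_density z * (u (fst z))\<^sup>2 + edge_density z * (u (snd z))\<^sup>2
      - 2 * (edge_density z * (u (fst z) * u (snd z))))
      ((\<integral> x. (u x)\<^sup>2 \<partial>\<pi>) + (\<integral> x. (u x)\<^sup>2 \<partial>\<pi>) - 2 * (\<integral> x. u x * kernel_apply P u x \<partial>\<pi>))"
    using sq has_bochner_integral_edge_density_cross[OF assms(1,2)]
    by (intro has_bochner_integral_diff has_bochner_integral_add has_bochner_integral_mult_right) auto
  then have D: "has_bochner_integral ?L (\<lambda>z. edge_density z * (u (fst z) - u (snd z))\<^sup>2) D"
    by (rule has_bochner_integral_cong[THEN iffD1, rotated 3]) (simp_all add: D_def power2_eq_square algebra_simps)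
  have "0 \<le> integral\<^sup>L ?L (\<lambda>z. edge_density z * (u (fst z) - u (snd z))\<^sup>2)"
    by (rule Bochner_Integration.integral_nonneg) simp
  then show "0 \<le> D"
    using has_bochner_integral_integral_eq[OF D] by simp
  show "flow (\<lambda>x y. ennreal ((u x - u y)\<^sup>2)) = ennreal D"
    using D by (subst flow_eq_nn_integral_edge_density; simp add: nn_integral_eq_integral has_bochner_integral_iff)
qed

lemma rayleigh_quotient_ge:
  assumes u: "u \<in> L2_0 p" and h: "conductance_ge h" "0 \<le> h"
  shows "h\<^sup>2 / 2 \<le> 1 - (\<integral> x. u x * kernel_apply P u x \<partial>\<pi>) / (\<integral> x. (u x)\<^sup>2 \<partial>\<pi>)"
proof -
  have u_borel[measurable]: "u \<in> borel_measurable borel" and sq_int: "integrable \<pi> (\<lambda>x. (u x)\<^sup>2)"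
    and N_ne: "(\<integral> x. (u x)\<^sup>2 \<partial>\<pi>) \<noteq> 0" and mean: "(\<integral> x. u x \<partial>\<pi>) = 0"
    using u unfolding L2_0_def by auto
  define N M where "N = (\<integral> x. (u x)\<^sup>2 \<partial>\<pi>)" and "M = (\<integral> x. u x * kernel_apply P u x \<partial>\<pi>)"
  have N_pos: "0 < N" using N_ne unfolding N_def by (simp add: order.strict_iff_order)
  have "integrable \<pi> u" by (rule \<pi>.square_integrable_imp_integrable) (simp_all add: sq_int)
  obtain c where c: "measure \<pi> {x. c < u x} \<le> 1/2" "measure \<pi> {x. u x < c} \<le> 1/2"
    using median_exists_borel[OF u_borel] by blast
  have shifted: "(\<lambda>x. (u x - c)\<^sup>2) = (\<lambda>x. (u x)\<^sup>2 - 2 * c * u x + c\<^sup>2)"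
    by (simp add: fun_eq_iff power2_diff)
  have "integrable \<pi> (\<lambda>x. (u x - c)\<^sup>2)"
    unfolding shifted using sq_int \<open>integrable \<pi> u\<close> by simp
  moreover have "(\<integral> x. (u x - c)\<^sup>2 \<partial>\<pi>) = N + c\<^sup>2"
    unfolding shifted using sq_int \<open>integrable \<pi> u\<close> mean by (simp add: N_def)
  ultimately have shifted_norm: "(\<integral>\<^sup>+ x. ennreal ((u x - c)\<^sup>2) \<partial>\<pi>) = ennreal (N + c\<^sup>2)"
    by (subst nn_integral_eq_integral) auto
  note dirichlet = flow_diff_sq_eq[OF u_borel sq_int, folded N_def M_def]
  have "ennreal (h\<^sup>2) * (\<integral>\<^sup>+ x. ennreal ((u x - c)\<^sup>2) \<partial>\<pi>) \<le> flow (\<lambda>x y. ennreal ((u x - u y)\<^sup>2))"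
    using flow_diff_sq_ge_median_zero[OF h, of "\<lambda>x. u x - c"] c shifted_norm by simp
  then have "ennreal (h\<^sup>2 * (N + c\<^sup>2)) \<le> ennreal (2 * N - 2 * M)"
    unfolding shifted_norm dirichlet(1) using N_pos by (simp add: ennreal_mult del: ennreal_plus)
  then have "h\<^sup>2 * (N + c\<^sup>2) \<le> 2 * N - 2 * M"
    using dirichlet(2) by simp
  moreover have "h\<^sup>2 * N \<le> h\<^sup>2 * (N + c\<^sup>2)" by (simp add: mult_left_mono)
  ultimately have "h\<^sup>2 * N \<le> 2 * N - 2 * M" by linarith
  then show ?thesis
    using N_pos unfolding N_def[symmetric] M_def[symmetric] by (simp add: field_simps)
qed

(* Gap P p is an infimum over L2_0 p, and Inf {} is unspecified for reals. *)
lemma L2_0_nonempty: "L2_0 p \<noteq> {}"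
proof -
  obtain k :: 'n where True by blast
  obtain c where c: "measure \<pi> {x. c < x $ k} \<le> 1/2" "measure \<pi> {x. x $ k < c} \<le> 1/2"
    using median_exists_borel[of "\<lambda>x. x $ k"] by auto
  define A where "A = {x::real ^ 'n. x $ k < c}"
  have [measurable]: "A \<in> sets borel" unfolding A_def by measurable
  have "measure \<pi> (-A) = measure \<pi> {x. c < x $ k} + measure \<pi> {x. x $ k = c}"
    unfolding A_def by (subst \<pi>.finite_measure_Union[symmetric]) (auto intro: arg_cong[where f="measure \<pi>"])
  then have "measure \<pi> (-A) \<le> 1/2"
    using c measure_dmeasure_hyperplane[OF p_borel, of k c] by simp
  moreover have "measure \<pi> (-A) = 1 - measure \<pi> A"
    using \<pi>.prob_compl[of A] by (simp add: Compl_eq_Diff_UNIV)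
  ultimately have A_half: "measure \<pi> A = 1/2" using c unfolding A_def by simp
  define u :: "real ^ 'n \<Rightarrow> real" where "u x = indicator A x - 1/2" for x
  have [measurable]: "u \<in> borel_measurable borel" unfolding u_def by measurable
  have sq: "(u x)\<^sup>2 = 1/4" for x unfolding u_def by (cases "x \<in> A") (auto simp: power2_eq_square)
  have "(\<integral> x. u x \<partial>\<pi>) = measure \<pi> A - 1/2"
    unfolding u_def by (subst Bochner_Integration.integral_diff) (auto intro!: \<pi>.integrable_const_bound[where B=1])
  then have "u \<in> L2_0 p"
    unfolding L2_0_def using A_half by (simp add: sq)
  then show ?thesis by blast
qed

theorem cheeger_inequality:
  assumes "conductance_ge h" "0 \<le> h"
  shows "h\<^sup>2 / 2 \<le> Gap P p"
  unfolding Gap_def using L2_0_nonempty rayleigh_quotient_ge[OF _ assms] by (rule cINF_greatest)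

end

section \<open>Conductance from isoperimetry and overlap\<close>

locale isoperimetric_kernel = reversible_kernel p P
  for p :: "real ^ 'n::finite \<Rightarrow> real" and P :: "real ^ 'n \<Rightarrow> real ^ 'n \<Rightarrow> real" +
  fixes F \<Upsilon> :: "real \<Rightarrow> real" and \<epsilon> \<delta> :: real
  assumes F_mono: "mono_on {0<..1/2} F"
    and F_nonneg: "\<forall>t\<in>{0<..1/2}. 0 \<le> F t"
    and U_mono: "mono_on {0..} \<Upsilon>"
    and U_nonneg: "\<forall>r\<ge>0. 0 \<le> \<Upsilon> r"
    and iso: "\<forall>S1 S2 S3. S1 \<in> sets borel \<and> S2 \<in> sets borel \<and> S3 \<in> sets borel
               \<and> S1 \<inter> S2 = {} \<and> S1 \<inter> S3 = {} \<and> S2 \<inter> S3 = {} \<and> S1 \<union> S2 \<union> S3 = UNIV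
               \<and> measure (dmeasure p) S1 > 0 \<and> measure (dmeasure p) S2 > 0
               \<longrightarrow> measure (dmeasure p) S3 \<ge>
                   \<Upsilon> (set_dist S1 S2) *
                   F (min (measure (dmeasure p) S1) (measure (dmeasure p) S2))"
    and eps: "\<epsilon> > 0" and delta: "\<delta> > 0"
    and overlap: "\<forall>x y. norm (x - y) < \<delta> \<longrightarrow>
                    TV (dmeasure (P x)) (dmeasure (P y)) < 1 - \<epsilon>"
begin

lemma escaping_points_far_apart:
  assumes "A \<in> sets borel"
    and x: "x \<in> A" "measure (dmeasure (P x)) (-A) < \<epsilon>/2"
    and y: "y \<notin> A" "measure (dmeasure (P y)) A < \<epsilon>/2"
  shows "\<delta> \<le> norm (x - y)"
proof (rule ccontr)
  assume "\<not> \<delta> \<le> norm (x - y)"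
  then have "TV (dmeasure (P x)) (dmeasure (P y)) < 1 - \<epsilon>"
    using overlap by simp
  moreover have "\<bar>measure (dmeasure (P x)) A - measure (dmeasure (P y)) A\<bar> \<le> TV (dmeasure (P x)) (dmeasure (P y))"
    using assms(1) by (intro abs_measure_diff_le_TV prob_space_P)
  ultimately show False
    using x y measure_P_Compl[OF assms(1), of x] by linarith
qed

lemma isoperimetry_mono:
  assumes [measurable]: "S1 \<in> sets borel" "S2 \<in> sets borel" and disjoint: "S1 \<inter> S2 = {}"
    and dist: "\<delta> \<le> set_dist S1 S2" and s: "0 < s" "s \<le> measure \<pi> S1" "s \<le> measure \<pi> S2"
    and half: "min (measure \<pi> S1) (measure \<pi> S2) \<le> 1/2"
  shows "\<Upsilon> \<delta> * F s \<le> measure \<pi> (- (S1 \<union> S2))"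
proof -
  have "\<Upsilon> \<delta> * F s \<le> \<Upsilon> (set_dist S1 S2) * F (min (measure \<pi> S1) (measure \<pi> S2))"
  proof (intro mult_mono)
    show "\<Upsilon> \<delta> \<le> \<Upsilon> (set_dist S1 S2)"
      using dist delta by (intro mono_onD[OF U_mono]) auto
    show "0 \<le> \<Upsilon> (set_dist S1 S2)"
      using dist delta U_nonneg by auto
    have "s \<le> min (measure \<pi> S1) (measure \<pi> S2)" using s by simp
    with half show "F s \<le> F (min (measure \<pi> S1) (measure \<pi> S2))"
      using s by (intro mono_onD[OF F_mono]) auto
    from \<open>s \<le> min _ _\<close> half have "s \<le> 1/2" by linarith
    then show "0 \<le> F s" using F_nonneg s by auto
  qed
  also have "\<dots> \<le> measure \<pi> (- (S1 \<union> S2))"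
    using iso[rule_format, of S1 S2 "- (S1 \<union> S2)"] s disjoint by auto
  finally show ?thesis .
qed

lemma isoperimetric_dichotomy:
  assumes \<theta>: "0 < \<theta>" "\<theta> \<le> 1"
    and \<kappa>: "\<kappa> \<le> 1 - \<theta>" "\<And>t. t \<in> {0<..1/2} \<Longrightarrow> 2 * t * \<kappa> \<le> \<Upsilon> \<delta> * F (\<theta> * t)"
    and A[measurable]: "A \<in> sets borel" and A_half: "measure \<pi> A \<le> 1/2"
    and S[measurable]: "S1 \<in> sets borel" "S2 \<in> sets borel" and S_sub: "S1 \<subseteq> A" "S2 \<subseteq> -A"
    and far: "S1 \<noteq> {} \<Longrightarrow> S2 \<noteq> {} \<Longrightarrow> \<delta> \<le> set_dist S1 S2"
  shows "\<kappa> * measure \<pi> A \<le> max (measure \<pi> (A - S1)) (measure \<pi> (-A - S2))"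
proof -
  define t a b where "t = measure \<pi> A" and "a = measure \<pi> (A - S1)" and "b = measure \<pi> (-A - S2)"
  have S1: "measure \<pi> S1 = t - a"
    unfolding a_def t_def using \<pi>.finite_measure_Diff[of A S1] S_sub by simp
  have S2: "measure \<pi> S2 = 1 - t - b"
    unfolding b_def t_def using \<pi>.finite_measure_Diff[of "-A" S2] \<pi>.prob_compl[of A] S_sub
    by (simp add: Compl_eq_Diff_UNIV)
  have "- (S1 \<union> S2) = (A - S1) \<union> (-A - S2)" using S_sub by auto
  moreover have "measure \<pi> ((A - S1) \<union> (-A - S2)) = a + b"
    unfolding a_def b_def by (rule \<pi>.finite_measure_Union) auto
  ultimately have S3: "measure \<pi> (- (S1 \<union> S2)) = a + b" by simp
  have t: "0 \<le> t" "t \<le> 1/2" and ab: "0 \<le> a" "0 \<le> b"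
    using A_half by (simp_all add: t_def a_def b_def)
  have "\<kappa> * t \<le> max a b"
  proof (cases "(1 - \<theta>) * t \<le> max a b")
    case True
    then show ?thesis using \<kappa>(1) t by (meson mult_right_mono order_trans)
  next
    case False
    then have t_pos: "t \<in> {0<..1/2}" using t ab by (cases "t = 0") (auto simp: le_max_iff_disj)
    have big: "\<theta> * t \<le> measure \<pi> S1" "\<theta> * t \<le> measure \<pi> S2" and "0 < \<theta> * t"
      using False t \<theta> t_pos unfolding S1 S2 by (auto simp: algebra_simps)
    then have "S1 \<noteq> {}" "S2 \<noteq> {}" by auto
    have "min (measure \<pi> S1) (measure \<pi> S2) \<le> 1/2"
      using min.cobounded1[of "measure \<pi> S1" "measure \<pi> S2"] S1 ab t by linarith
    have "2 * t * \<kappa> \<le> \<Upsilon> \<delta> * F (\<theta> * t)" using \<kappa>(2)[OF t_pos] .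
    also have "\<dots> \<le> a + b"
      unfolding S3[symmetric] using S_sub big \<open>0 < \<theta> * t\<close> far[OF \<open>S1 \<noteq> {}\<close> \<open>S2 \<noteq> {}\<close>]
        \<open>min _ _ \<le> 1/2\<close> by (intro isoperimetry_mono) auto
    finally have "2 * (\<kappa> * t) \<le> a + b" by (simp add: mult_ac)
    then show ?thesis by linarith
  qed
  then show ?thesis unfolding t_def a_def b_def .
qed

lemma conductance_ge_isoperimetric:
  assumes \<theta>: "0 < \<theta>" "\<theta> \<le> 1"
    and \<kappa>: "\<kappa> \<le> 1 - \<theta>" "\<And>t. t \<in> {0<..1/2} \<Longrightarrow> 2 * t * \<kappa> \<le> \<Upsilon> \<delta> * F (\<theta> * t)"
  shows "conductance_ge (\<epsilon>/2 * \<kappa>)"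
  unfolding conductance_ge_def
proof (intro ballI impI)
  fix A :: "(real ^ 'n) set"
  assume A[measurable]: "A \<in> sets borel" and A_half: "measure \<pi> A \<le> 1/2"
  define S1 where "S1 = {x \<in> A. measure (dmeasure (P x)) (-A) < \<epsilon>/2}"
  define S2 where "S2 = {x \<in> -A. measure (dmeasure (P x)) A < \<epsilon>/2}"
  have [measurable]: "S1 \<in> sets borel" "S2 \<in> sets borel"
    unfolding S1_def S2_def by measurable
  have "A - S1 = {x \<in> A. \<epsilon>/2 \<le> measure (dmeasure (P x)) (-A)}"
    unfolding S1_def by auto
  then have escape_A: "ennreal (\<epsilon>/2 * measure \<pi> (A - S1)) \<le> ergodic_flow A"
    using ergodic_flow_ge_escape[OF A, of "\<epsilon>/2"] eps by simp
  have "-A - S2 = {x \<in> -A. \<epsilon>/2 \<le> measure (dmeasure (P x)) (- (-A))}"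
    unfolding S2_def by auto
  then have escape_cA: "ennreal (\<epsilon>/2 * measure \<pi> (-A - S2)) \<le> ergodic_flow A"
    using ergodic_flow_ge_escape[of "-A" "\<epsilon>/2"] ergodic_flow_Compl[OF A] eps by simp
  have far: "\<delta> \<le> set_dist S1 S2" if "S1 \<noteq> {}" "S2 \<noteq> {}"
    using that escaping_points_far_apart[OF A] unfolding S1_def S2_def by (intro set_dist_ge) auto
  have "\<kappa> * measure \<pi> A \<le> max (measure \<pi> (A - S1)) (measure \<pi> (-A - S2))"
    by (rule isoperimetric_dichotomy[OF \<theta> \<kappa> A A_half]) (use far in \<open>auto simp: S1_def S2_def\<close>)
  then consider "\<kappa> * measure \<pi> A \<le> measure \<pi> (A - S1)" | "\<kappa> * measure \<pi> A \<le> measure \<pi> (-A - S2)"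
    unfolding le_max_iff_disj by blast
  then show "ennreal (\<epsilon>/2 * \<kappa> * measure \<pi> A) \<le> ergodic_flow A"
  proof cases
    case 1
    then have "\<epsilon>/2 * \<kappa> * measure \<pi> A \<le> \<epsilon>/2 * measure \<pi> (A - S1)"
      using eps by (simp add: mult.assoc)
    then show ?thesis using escape_A by (meson ennreal_leI order_trans)
  next
    case 2
    then have "\<epsilon>/2 * \<kappa> * measure \<pi> A \<le> \<epsilon>/2 * measure \<pi> (-A - S2)"
      using eps by (simp add: mult.assoc)
    then show ?thesis using escape_cA by (meson ennreal_leI order_trans)
  qed
qed

lemma F_scaled_nonneg:
  assumes "0 < \<theta>" "\<theta> \<le> 1" "t \<in> {0<..1/2}"
  shows "0 \<le> F (\<theta> * t)"
proof -
  have "\<theta> * t \<le> t" using assms by (intro mult_left_le_one_le) auto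
  moreover have "0 < \<theta> * t" "t \<le> 1/2" using assms by auto
  ultimately show ?thesis using F_nonneg by force
qed

lemma INF_F_ratio_nonneg:
  assumes "0 < \<theta>" "\<theta> \<le> 1"
  shows "0 \<le> (INF t\<in>{0<..1/2}. F (\<theta> * t) / (2 * t))"
  using F_scaled_nonneg[OF assms] by (intro cINF_greatest) auto

lemma INF_F_ratio_le:
  assumes "0 < \<theta>" "\<theta> \<le> 1" and t: "t \<in> {0<..1/2}"
  shows "2 * t * (INF s\<in>{0<..1/2}. F (\<theta> * s) / (2 * s)) \<le> F (\<theta> * t)"
proof -
  have "bdd_below ((\<lambda>s. F (\<theta> * s) / (2 * s)) ` {0<..1/2})"
    using F_scaled_nonneg[OF assms(1,2)] by (intro bdd_belowI2[where m=0]) auto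
  then have "(INF s\<in>{0<..1/2}. F (\<theta> * s) / (2 * s)) \<le> F (\<theta> * t) / (2 * t)"
    using t by (rule cINF_lower)
  then show ?thesis using t by (simp add: field_simps)
qed

lemma Gap_ge_theta:
  assumes \<theta>: "0 < \<theta>" "\<theta> \<le> 1"
  shows "\<epsilon>\<^sup>2 / 8 * (min (1 - \<theta>) (\<Upsilon> \<delta> * (INF t\<in>{0<..1/2}. F (\<theta> * t) / (2 * t))))\<^sup>2 \<le> Gap P p"
proof -
  define \<kappa> where "\<kappa> = min (1 - \<theta>) (\<Upsilon> \<delta> * (INF t\<in>{0<..1/2}. F (\<theta> * t) / (2 * t)))"
  have U_delta: "0 \<le> \<Upsilon> \<delta>" using U_nonneg delta by auto
  have "2 * t * \<kappa> \<le> \<Upsilon> \<delta> * F (\<theta> * t)" if t: "t \<in> {0<..1/2}" for t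
  proof -
    have "2 * t * \<kappa> \<le> \<Upsilon> \<delta> * (2 * t * (INF s\<in>{0<..1/2}. F (\<theta> * s) / (2 * s)))"
      using t by (simp add: \<kappa>_def)
    also have "\<dots> \<le> \<Upsilon> \<delta> * F (\<theta> * t)"
      using INF_F_ratio_le[OF \<theta> t] U_delta by (rule mult_left_mono)
    finally show ?thesis .
  qed
  then have "conductance_ge (\<epsilon>/2 * \<kappa>)"
    using \<theta> by (intro conductance_ge_isoperimetric) (auto simp: \<kappa>_def)
  moreover have "0 \<le> \<epsilon>/2 * \<kappa>"
    using eps \<theta> INF_F_ratio_nonneg[OF \<theta>] U_delta by (simp add: \<kappa>_def)
  ultimately have "(\<epsilon>/2 * \<kappa>)\<^sup>2 / 2 \<le> Gap P p" by (rule cheeger_inequality)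
  moreover have "(\<epsilon>/2 * \<kappa>)\<^sup>2 / 2 = \<epsilon>\<^sup>2 / 8 * \<kappa>\<^sup>2" by (simp add: power2_eq_square)
  ultimately show ?thesis unfolding \<kappa>_def by simp
qed

lemma Gap_ge_concave:
  assumes "concave_on {0<..1/2} F"
  shows "\<epsilon>\<^sup>2 / 8 * (min (1/2) (\<Upsilon> \<delta> * F (1/4)))\<^sup>2 \<le> Gap P p"
proof -
  have "F (1/4) \<le> F (1/2 * t) / (2 * t)" if "t \<in> {0<..1/2}" for t
    using concave_on_nonneg_scaled_le[OF assms F_nonneg, of "t/2" "1/4"] that by (simp add: field_simps)
  then have "F (1/4) \<le> (INF t\<in>{0<..1/2}. F (1/2 * t) / (2 * t))"
    by (intro cINF_greatest) auto
  moreover have "0 \<le> \<Upsilon> \<delta>" "0 \<le> F (1/4)" using U_nonneg F_nonneg delta by auto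
  ultimately have "(min (1/2) (\<Upsilon> \<delta> * F (1/4)))\<^sup>2
      \<le> (min (1 - 1/2) (\<Upsilon> \<delta> * (INF t\<in>{0<..1/2}. F (1/2 * t) / (2 * t))))\<^sup>2"
    by (intro power_mono min.mono mult_left_mono) auto
  then have "\<epsilon>\<^sup>2 / 8 * (min (1/2) (\<Upsilon> \<delta> * F (1/4)))\<^sup>2
      \<le> \<epsilon>\<^sup>2 / 8 * (min (1 - 1/2) (\<Upsilon> \<delta> * (INF t\<in>{0<..1/2}. F (1/2 * t) / (2 * t))))\<^sup>2"
    by (intro mult_left_mono) auto
  also have "\<dots> \<le> Gap P p" by (rule Gap_ge_theta) auto
  finally show ?thesis .
qed

end

theorem mainTheorem1:
  fixes p :: "real ^ 'n::finite \<Rightarrow> real"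
    and P :: "real ^ 'n \<Rightarrow> real ^ 'n \<Rightarrow> real"
    and F \<Upsilon> :: "real \<Rightarrow> real"
    and \<epsilon> \<delta> :: real
  assumes pi: "prob_density p"
    and kernel: "markov_kernel_density P"
    and rev: "reversible P p"
    and F_mono: "mono_on {0<..1/2} F"
    and F_nonneg: "\<forall>t\<in>{0<..1/2}. 0 \<le> F t"
    and U_mono: "mono_on {0..} \<Upsilon>"
    and U_nonneg: "\<forall>r\<ge>0. 0 \<le> \<Upsilon> r"
    and iso: "\<forall>S1 S2 S3. S1 \<in> sets borel \<and> S2 \<in> sets borel \<and> S3 \<in> sets borel
               \<and> S1 \<inter> S2 = {} \<and> S1 \<inter> S3 = {} \<and> S2 \<inter> S3 = {} \<and> S1 \<union> S2 \<union> S3 = UNIV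
               \<and> measure (dmeasure p) S1 > 0 \<and> measure (dmeasure p) S2 > 0
               \<longrightarrow> measure (dmeasure p) S3 \<ge>
                   \<Upsilon> (set_dist S1 S2) *
                   F (min (measure (dmeasure p) S1) (measure (dmeasure p) S2))"
    and eps: "\<epsilon> > 0" and delta: "\<delta> > 0"
    and overlap: "\<forall>x y. norm (x - y) < \<delta> \<longrightarrow>
                    TV (dmeasure (P x)) (dmeasure (P y)) < 1 - \<epsilon>"
  shows "Gap P p \<ge> \<epsilon>\<^sup>2 / 8 *
           (SUP \<theta> \<in> {0<..1}. min (1 - \<theta>)
               (\<Upsilon> \<delta> * (INF t \<in> {0<..1/2}. F (\<theta> * t) / (2 * t))))\<^sup>2
       \<and> (concave_on {0<..1/2} F \<longrightarrow>
           Gap P p \<ge> \<epsilon>\<^sup>2 / 8 * (min (1/2) (\<Upsilon> \<delta> * F (1/4)))\<^sup>2)"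
proof -
  interpret isoperimetric_kernel p P F \<Upsilon> \<epsilon> \<delta>
    by unfold_locales (fact assms)+
  have "(SUP \<theta>\<in>{0<..1}. min (1 - \<theta>) (\<Upsilon> \<delta> * (INF t\<in>{0<..1/2}. F (\<theta> * t) / (2 * t))))\<^sup>2
      \<le> 8 * Gap P p / \<epsilon>\<^sup>2"
  proof (rule cSUP_sq_le)
    fix \<theta> :: real assume "\<theta> \<in> {0<..1}"
    then show "(min (1 - \<theta>) (\<Upsilon> \<delta> * (INF t\<in>{0<..1/2}. F (\<theta> * t) / (2 * t))))\<^sup>2 \<le> 8 * Gap P p / \<epsilon>\<^sup>2"
      using Gap_ge_theta[of \<theta>] eps by (simp add: field_simps)
    show "0 \<le> min (1 - \<theta>) (\<Upsilon> \<delta> * (INF t\<in>{0<..1/2}. F (\<theta> * t) / (2 * t)))"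
      using \<open>\<theta> \<in> {0<..1}\<close> INF_F_ratio_nonneg[of \<theta>] U_nonneg delta by simp
  qed simp
  then show ?thesis
    using Gap_ge_concave eps by (simp add: field_simps)
qed

end
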